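(* The price of anarchy (supremum over all weights $w_1,w_2\ge0$ with $w_1+w_2>0$ and all instances, with respect to pure Nash equilibria) for symmetric simultaneous two-player weighted network routing games with affine costs and uniform cost functions is equal to $2$.
   Context: A weighted two-player network routing game with affine costs consists of a directed graph whose arcs $r$ are resources with coefficients $\alpha_r,\beta_r\ge0$, two players $i=1,2$ with weights $w_i\ge0$, each with a source $s_i$ and a sink $t_i$; the actions $\mathcal{A}_i$ of player $i$ are the arc sets of directed $s_i$–$t_i$ paths. It is symmetric if both players have the same source and the same sink. For an action profile $A=(A_1,A_2)$ the load of arc $r$ is $x_r(A)=\sum_{j:\, r\in A_j} w_j$. With uniform costs, player $i$ pays $C_i(A)=\sum_{r\in A_i}(\alpha_r+\beta_r x_r(A))$. The social cost is $C(A)=C_1(A)+C_2(A)$. A pure Nash equilibrium is a profile from which no player can lower her cost by unilaterally changing her action. The price of anarchy of an instance is the maximum over Nash equilibria $A$ of $C(A)/\min_{A'} C(A')$; the price of anarchy of a class is the supremum over all instances (with positive optimal social cost). *)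

theory Defs
  imports Complex_Main "HOL-Library.Extended_Real"
begin

text \<open>Directed multigraph: arcs are natural numbers in a finite set E, with tail and head
  maps into vertices (natural numbers). Parallel arcs are allowed.\<close>

fun walk :: "(nat \<Rightarrow> nat) \<Rightarrow> (nat \<Rightarrow> nat) \<Rightarrow> nat set \<Rightarrow> nat \<Rightarrow> nat \<Rightarrow> nat list \<Rightarrow> bool" where
  "walk tail head E u v [] = (u = v)"
| "walk tail head E u v (e # es) = (e \<in> E \<and> tail e = u \<and> walk tail head E (head e) v es)"

definition acts :: "(nat \<Rightarrow> nat) \<Rightarrow> (nat \<Rightarrow> nat) \<Rightarrow> nat set \<Rightarrow> nat \<Rightarrow> nat \<Rightarrow> nat set set" where
  "acts tail head E s t = {set es | es. walk tail head E s t es \<and> distinct (s # map head es)}"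

definition load :: "real \<Rightarrow> real \<Rightarrow> nat set \<Rightarrow> nat set \<Rightarrow> nat \<Rightarrow> real" where
  "load w1 w2 A1 A2 r = (if r \<in> A1 then w1 else 0) + (if r \<in> A2 then w2 else 0)"

definition pcost :: "(nat \<Rightarrow> real) \<Rightarrow> (nat \<Rightarrow> real) \<Rightarrow> real \<Rightarrow> real \<Rightarrow> nat set \<Rightarrow> nat set \<Rightarrow> nat set \<Rightarrow> real" where
  "pcost \<alpha> \<beta> w1 w2 A1 A2 Ai = (\<Sum>r\<in>Ai. \<alpha> r + \<beta> r * load w1 w2 A1 A2 r)"

definition cost1 where "cost1 \<alpha> \<beta> w1 w2 A1 A2 = pcost \<alpha> \<beta> w1 w2 A1 A2 A1"
definition cost2 where "cost2 \<alpha> \<beta> w1 w2 A1 A2 = pcost \<alpha> \<beta> w1 w2 A1 A2 A2"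

definition social :: "(nat \<Rightarrow> real) \<Rightarrow> (nat \<Rightarrow> real) \<Rightarrow> real \<Rightarrow> real \<Rightarrow> nat set \<Rightarrow> nat set \<Rightarrow> real" where
  "social \<alpha> \<beta> w1 w2 A1 A2 = cost1 \<alpha> \<beta> w1 w2 A1 A2 + cost2 \<alpha> \<beta> w1 w2 A1 A2"

definition is_NE :: "nat set set \<Rightarrow> (nat \<Rightarrow> real) \<Rightarrow> (nat \<Rightarrow> real) \<Rightarrow> real \<Rightarrow> real \<Rightarrow> nat set \<Rightarrow> nat set \<Rightarrow> bool" where
  "is_NE Acts \<alpha> \<beta> w1 w2 A1 A2 \<longleftrightarrow>
     A1 \<in> Acts \<and> A2 \<in> Acts \<and>
     (\<forall>B\<in>Acts. cost1 \<alpha> \<beta> w1 w2 A1 A2 \<le> cost1 \<alpha> \<beta> w1 w2 B A2) \<and>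
     (\<forall>B\<in>Acts. cost2 \<alpha> \<beta> w1 w2 A1 A2 \<le> cost2 \<alpha> \<beta> w1 w2 A1 B)"

definition opt :: "nat set set \<Rightarrow> (nat \<Rightarrow> real) \<Rightarrow> (nat \<Rightarrow> real) \<Rightarrow> real \<Rightarrow> real \<Rightarrow> real" where
  "opt Acts \<alpha> \<beta> w1 w2 = Min {social \<alpha> \<beta> w1 w2 A1 A2 | A1 A2. A1 \<in> Acts \<and> A2 \<in> Acts}"

definition valid_instance :: "nat set \<Rightarrow> (nat \<Rightarrow> real) \<Rightarrow> (nat \<Rightarrow> real) \<Rightarrow> real \<Rightarrow> real \<Rightarrow> bool" where
  "valid_instance E \<alpha> \<beta> w1 w2 \<longleftrightarrow> finite E \<and> (\<forall>r\<in>E. \<alpha> r \<ge> 0 \<and> \<beta> r \<ge> 0) \<and>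
     w1 \<ge> 0 \<and> w2 \<ge> 0 \<and> w1 + w2 > 0"

text \<open>The price of anarchy of the class is the
  supremum of this set (sup over instances of the max over NE).\<close>
definition PoA_ratios :: "real set" where
  "PoA_ratios = {social \<alpha> \<beta> w1 w2 A1 A2 / opt (acts tail head E s t) \<alpha> \<beta> w1 w2
      | E tail head \<alpha> \<beta> w1 w2 s t A1 A2.
        valid_instance E \<alpha> \<beta> w1 w2 \<and> is_NE (acts tail head E s t) \<alpha> \<beta> w1 w2 A1 A2 \<and>
        opt (acts tail head E s t) \<alpha> \<beta> w1 w2 > 0}"

end

theory Submission
  imports Defs
begin

text \<open>Upper bound: let \<open>(A\<^sub>1, A\<^sub>2)\<close> be an equilibrium, \<open>(B\<^sub>1, B\<^sub>2)\<close> any profile and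
  \<open>W = w\<^sub>1 + w\<^sub>2\<close>. Every arc carries load at most \<open>W\<close>, so deviating to \<open>B\<^sub>j\<close> shows that each
  player pays at most the cost of \<open>B\<^sub>j\<close> at load \<open>W\<close>, hence
  \<open>C(A) \<le> 2 (a\<^sub>j + W b\<^sub>j)\<close> with \<open>a\<^sub>j, b\<^sub>j\<close> the sums of the \<open>\<alpha>\<close>'s and \<open>\<beta>\<close>'s along \<open>B\<^sub>j\<close>.
  Averaging these two bounds with weights \<open>w\<^sub>1, w\<^sub>2\<close> gives
  \<open>W C(A) \<le> 2 W (a\<^sub>1 + a\<^sub>2 + w\<^sub>1 b\<^sub>1 + w\<^sub>2 b\<^sub>2) \<le> 2 W C(B)\<close>, since player \<open>j\<close> alone
  already puts load \<open>w\<^sub>j\<close> on \<open>B\<^sub>j\<close>.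
  Lower bound: on two parallel links with costs \<open>x\<close> and \<open>1\<close>, a player of weight \<open>1\<close> and
  a player of weight \<open>0\<close> who both take the first link form an equilibrium of cost \<open>2\<close>,
  whereas the optimum costs \<open>1\<close>.\<close>

lemma walk_set_subset: "walk tail head E u v es \<Longrightarrow> set es \<subseteq> E"
  by (induction es arbitrary: u) auto

lemma acts_subset: "A \<in> acts tail head E s t \<Longrightarrow> A \<subseteq> E"
  unfolding acts_def using walk_set_subset by blast

lemma finite_acts: "finite E \<Longrightarrow> finite (acts tail head E s t)"
  by (rule finite_subset[of _ "Pow E"]) (auto dest: acts_subset)

definition cost_at_load :: "(nat \<Rightarrow> real) \<Rightarrow> (nat \<Rightarrow> real) \<Rightarrow> real \<Rightarrow> nat set \<Rightarrow> real" where
  "cost_at_load \<alpha> \<beta> x P = (\<Sum>r\<in>P. \<alpha> r + \<beta> r * x)"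

lemma cost_at_load_eq: "cost_at_load \<alpha> \<beta> x P = (\<Sum>r\<in>P. \<alpha> r) + x * (\<Sum>r\<in>P. \<beta> r)"
  by (simp add: cost_at_load_def sum.distrib sum_distrib_left mult.commute)

lemma pcost_le_cost_at_load:
  assumes "\<And>r. r \<in> P \<Longrightarrow> \<beta> r \<ge> 0 \<and> load w1 w2 A1 A2 r \<le> x"
  shows "pcost \<alpha> \<beta> w1 w2 A1 A2 P \<le> cost_at_load \<alpha> \<beta> x P"
  unfolding pcost_def cost_at_load_def
  by (intro sum_mono add_left_mono mult_left_mono) (simp_all add: assms)

lemma pcost_ge_cost_at_load:
  assumes "\<And>r. r \<in> P \<Longrightarrow> \<beta> r \<ge> 0 \<and> x \<le> load w1 w2 A1 A2 r"
  shows "cost_at_load \<alpha> \<beta> x P \<le> pcost \<alpha> \<beta> w1 w2 A1 A2 P"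
  unfolding pcost_def cost_at_load_def
  by (intro sum_mono add_left_mono mult_left_mono) (simp_all add: assms)

lemma load_le_total_weight: "w1 \<ge> 0 \<Longrightarrow> w2 \<ge> 0 \<Longrightarrow> load w1 w2 A1 A2 r \<le> w1 + w2"
  by (simp add: load_def)

lemma social_ge_cost_at_own_load:
  assumes "\<forall>r\<in>A1 \<union> A2. \<beta> r \<ge> 0" "w1 \<ge> 0" "w2 \<ge> 0"
  shows "cost_at_load \<alpha> \<beta> w1 A1 + cost_at_load \<alpha> \<beta> w2 A2 \<le> social \<alpha> \<beta> w1 w2 A1 A2"
  unfolding social_def cost1_def cost2_def
  using assms by (intro add_mono pcost_ge_cost_at_load) (auto simp: load_def)

lemma NE_social_le_cost_at_total_load:
  assumes ne: "is_NE Acts \<alpha> \<beta> w1 w2 A1 A2" and B: "B \<in> Acts"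
    and \<beta>: "\<forall>r\<in>B. \<beta> r \<ge> 0" and w: "w1 \<ge> 0" "w2 \<ge> 0"
  shows "social \<alpha> \<beta> w1 w2 A1 A2 \<le> 2 * cost_at_load \<alpha> \<beta> (w1 + w2) B"
proof -
  have "cost1 \<alpha> \<beta> w1 w2 A1 A2 \<le> cost1 \<alpha> \<beta> w1 w2 B A2"
    and "cost2 \<alpha> \<beta> w1 w2 A1 A2 \<le> cost2 \<alpha> \<beta> w1 w2 A1 B"
    using ne B by (auto simp: is_NE_def)
  moreover have "cost1 \<alpha> \<beta> w1 w2 B A2 \<le> cost_at_load \<alpha> \<beta> (w1 + w2) B"
    and "cost2 \<alpha> \<beta> w1 w2 A1 B \<le> cost_at_load \<alpha> \<beta> (w1 + w2) B"
    unfolding cost1_def cost2_def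
    using \<beta> w by (auto intro: pcost_le_cost_at_load load_le_total_weight)
  ultimately show ?thesis
    unfolding social_def by linarith
qed

lemma NE_social_le_twice_social:
  assumes ne: "is_NE Acts \<alpha> \<beta> w1 w2 A1 A2" and B1: "B1 \<in> Acts" and B2: "B2 \<in> Acts"
    and nonneg: "\<forall>r\<in>B1 \<union> B2. \<alpha> r \<ge> 0 \<and> \<beta> r \<ge> 0"
    and w: "w1 \<ge> 0" "w2 \<ge> 0" "w1 + w2 > 0"
  shows "social \<alpha> \<beta> w1 w2 A1 A2 \<le> 2 * social \<alpha> \<beta> w1 w2 B1 B2"
proof -
  define W where "W = w1 + w2"
  define a1 a2 b1 b2 where sums: "a1 = (\<Sum>r\<in>B1. \<alpha> r)" "a2 = (\<Sum>r\<in>B2. \<alpha> r)"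
    "b1 = (\<Sum>r\<in>B1. \<beta> r)" "b2 = (\<Sum>r\<in>B2. \<beta> r)"
  let ?CA = "social \<alpha> \<beta> w1 w2 A1 A2"
  have "a1 \<ge> 0" "a2 \<ge> 0"
    unfolding sums using nonneg by (auto intro: sum_nonneg)
  have own: "a1 + a2 + w1 * b1 + w2 * b2 \<le> social \<alpha> \<beta> w1 w2 B1 B2"
    using social_ge_cost_at_own_load[of B1 B2 \<beta> w1 w2 \<alpha>] nonneg w
    by (simp add: sums cost_at_load_eq)
  have "?CA \<le> 2 * (a1 + W * b1)" and "?CA \<le> 2 * (a2 + W * b2)"
    using NE_social_le_cost_at_total_load[OF ne B1] NE_social_le_cost_at_total_load[OF ne B2]
      nonneg w by (auto simp: W_def sums cost_at_load_eq)
  then have "W * ?CA \<le> w1 * (2 * (a1 + W * b1)) + w2 * (2 * (a2 + W * b2))"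
    unfolding W_def using w by (simp add: distrib_right add_mono mult_left_mono)
  also have "\<dots> \<le> W * (2 * (a1 + a2 + w1 * b1 + w2 * b2))"
    using \<open>a1 \<ge> 0\<close> \<open>a2 \<ge> 0\<close> w by (simp add: W_def algebra_simps)
  also have "\<dots> \<le> W * (2 * social \<alpha> \<beta> w1 w2 B1 B2)"
    using own w by (simp add: W_def)
  finally have "W * ?CA \<le> W * (2 * social \<alpha> \<beta> w1 w2 B1 B2)" .
  then show ?thesis
    using \<open>w1 + w2 > 0\<close> unfolding W_def by (rule mult_left_le_imp_le)
qed

lemma opt_attained:
  assumes "finite Acts" "A1 \<in> Acts" "A2 \<in> Acts"
  obtains B1 B2 where "B1 \<in> Acts" "B2 \<in> Acts"
    "opt Acts \<alpha> \<beta> w1 w2 = social \<alpha> \<beta> w1 w2 B1 B2"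
proof -
  let ?S = "{social \<alpha> \<beta> w1 w2 B1 B2 | B1 B2. B1 \<in> Acts \<and> B2 \<in> Acts}"
  have "?S = (\<lambda>(B1, B2). social \<alpha> \<beta> w1 w2 B1 B2) ` (Acts \<times> Acts)"
    by auto
  then have "finite ?S" "?S \<noteq> {}"
    using assms by auto
  then have "opt Acts \<alpha> \<beta> w1 w2 \<in> ?S"
    unfolding opt_def by (rule Min_in)
  then show ?thesis
    using that by blast
qed

lemma PoA_ratio_le_2: "x \<in> PoA_ratios \<Longrightarrow> x \<le> 2"
proof (clarsimp simp: PoA_ratios_def)
  fix E tail head \<alpha> \<beta> w1 w2 s t A1 A2
  let ?Acts = "acts tail head E s t"
  assume vi: "valid_instance E \<alpha> \<beta> w1 w2" and ne: "is_NE ?Acts \<alpha> \<beta> w1 w2 A1 A2"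
    and pos: "opt ?Acts \<alpha> \<beta> w1 w2 > 0"
  have "finite ?Acts" "A1 \<in> ?Acts" "A2 \<in> ?Acts"
    using vi ne finite_acts by (auto simp: valid_instance_def is_NE_def)
  then obtain B1 B2 where B: "B1 \<in> ?Acts" "B2 \<in> ?Acts"
    and opt: "opt ?Acts \<alpha> \<beta> w1 w2 = social \<alpha> \<beta> w1 w2 B1 B2"
    by (rule opt_attained)
  have "\<forall>r\<in>B1 \<union> B2. \<alpha> r \<ge> 0 \<and> \<beta> r \<ge> 0"
    using B vi acts_subset by (fastforce simp: valid_instance_def)
  then have "social \<alpha> \<beta> w1 w2 A1 A2 \<le> 2 * opt ?Acts \<alpha> \<beta> w1 w2"
    using NE_social_le_twice_social[OF ne B] vi opt by (simp add: valid_instance_def)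
  then show "social \<alpha> \<beta> w1 w2 A1 A2 / opt ?Acts \<alpha> \<beta> w1 w2 \<le> 2"
    using pos by (simp add: divide_le_eq)
qed

lemma walk_parallel_arcs:
  assumes "walk (\<lambda>_. 0) (\<lambda>_. 1) E 0 1 es" "distinct (0 # map (\<lambda>_. 1 :: nat) es)"
  shows "\<exists>e\<in>E. es = [e]"
proof (cases es)
  case (Cons e es')
  then show ?thesis
    using assms by (cases es') auto
qed (use assms in simp)

lemma acts_parallel_arcs: "acts (\<lambda>_. 0) (\<lambda>_. 1) E 0 1 = (\<lambda>e. {e}) ` E"
proof (intro equalityI subsetI)
  fix A assume "A \<in> acts (\<lambda>_. 0) (\<lambda>_. 1) E 0 1"
  then obtain es where "A = set es" "walk (\<lambda>_. 0) (\<lambda>_. 1) E 0 1 es"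
    "distinct (0 # map (\<lambda>_. 1 :: nat) es)"
    unfolding acts_def by blast
  then show "A \<in> (\<lambda>e. {e}) ` E"
    using walk_parallel_arcs by fastforce
next
  fix A assume "A \<in> (\<lambda>e. {e}) ` E"
  then obtain e where "e \<in> E" "A = set [e]"
    by auto
  then show "A \<in> acts (\<lambda>_. 0) (\<lambda>_. 1) E 0 1"
    unfolding acts_def by fastforce
qed

lemma PoA_ratiosI:
  assumes "valid_instance E \<alpha> \<beta> w1 w2" "is_NE (acts tail head E s t) \<alpha> \<beta> w1 w2 A1 A2"
    "opt (acts tail head E s t) \<alpha> \<beta> w1 w2 > 0"
  shows "social \<alpha> \<beta> w1 w2 A1 A2 / opt (acts tail head E s t) \<alpha> \<beta> w1 w2 \<in> PoA_ratios"
  unfolding PoA_ratios_def using assms by blast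

lemma two_in_PoA_ratios: "2 \<in> PoA_ratios"
proof -
  define \<alpha> :: "nat \<Rightarrow> real" where "\<alpha> r = (if r = 0 then 0 else 1)" for r
  define \<beta> :: "nat \<Rightarrow> real" where "\<beta> r = (if r = 0 then 1 else 0)" for r
  let ?Acts = "acts (\<lambda>_. 0) (\<lambda>_. 1) {0, 1} 0 1"
  let ?C = "social \<alpha> \<beta> 1 0"
  have Acts: "?Acts = {{0}, {1}}"
    unfolding acts_parallel_arcs by simp
  have C: "?C {0} {0} = 2" "?C {0} {1} = 2" "?C {1} {0} = 1" "?C {1} {1} = 2"
    by (simp_all add: social_def cost1_def cost2_def pcost_def load_def \<alpha>_def \<beta>_def)
  have "opt ?Acts \<alpha> \<beta> 1 0 = Min {?C {0} {0}, ?C {0} {1}, ?C {1} {0}, ?C {1} {1}}"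
    unfolding opt_def Acts by (rule arg_cong[where f = Min]) blast
  also have "\<dots> = 1"
    unfolding C by simp
  finally have opt: "opt ?Acts \<alpha> \<beta> 1 0 = 1" .
  have "is_NE ?Acts \<alpha> \<beta> 1 0 {0} {0}"
    unfolding Acts by (auto simp: is_NE_def cost1_def cost2_def pcost_def load_def \<alpha>_def \<beta>_def)
  moreover have "valid_instance {0, 1} \<alpha> \<beta> 1 0"
    by (simp add: valid_instance_def \<alpha>_def \<beta>_def)
  ultimately have "?C {0} {0} / opt ?Acts \<alpha> \<beta> 1 0 \<in> PoA_ratios"
    by (intro PoA_ratiosI) (simp_all only: opt zero_less_one)
  then show ?thesis
    unfolding opt C by simp
qed

theorem theorem4:
  shows "(SUP x\<in>PoA_ratios. ereal x) = 2"
proof (rule antisym)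
  show "(SUP x\<in>PoA_ratios. ereal x) \<le> 2"
    by (rule SUP_least) (simp add: PoA_ratio_le_2)
  have "ereal 2 \<le> (SUP x\<in>PoA_ratios. ereal x)"
    using two_in_PoA_ratios by (rule SUP_upper)
  then show "2 \<le> (SUP x\<in>PoA_ratios. ereal x)"
    by simp
qed

end
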